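(* Let $G$ be a clique tree on $n$ vertices with $b$ blocks, each block having at least $3$ vertices, and let $k=Z(G)$. Then $k=n-b$, and consequently $\lfloor n/2\rfloor+1\le k\le n-1$.
   Context: A block of a connected graph is a maximal connected subgraph without a cut vertex of its own; a clique tree is a connected graph each of whose blocks is a complete graph. $Z(G)$ denotes the zero forcing number: with vertices coloured blue or white, a blue vertex with exactly one white neighbour turns that neighbour blue; $Z(G)$ is the minimum size of an initially blue set from which all vertices eventually become blue. *)

theory Defs
  imports Main
begin

definition graph :: "'a set \<Rightarrow> ('a \<Rightarrow> 'a \<Rightarrow> bool) \<Rightarrow> bool" where
  "graph V E \<longleftrightarrow> finite V \<and> (\<forall>x y. E x y \<longrightarrow> x \<in> V \<and> y \<in> V)
     \<and> (\<forall>x y. E x y \<longrightarrow> E y x) \<and> (\<forall>x. \<not> E x x)"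

definition connected_on :: "('a \<Rightarrow> 'a \<Rightarrow> bool) \<Rightarrow> 'a set \<Rightarrow> bool" where
  "connected_on E S \<longleftrightarrow> S \<noteq> {} \<and>
     (\<forall>x\<in>S. \<forall>y\<in>S. (\<lambda>u v. E u v \<and> u \<in> S \<and> v \<in> S)\<^sup>*\<^sup>* x y)"

definition no_cut_vertex :: "('a \<Rightarrow> 'a \<Rightarrow> bool) \<Rightarrow> 'a set \<Rightarrow> bool" where
  "no_cut_vertex E S \<longleftrightarrow> (\<forall>v\<in>S. S - {v} \<noteq> {} \<longrightarrow> connected_on E (S - {v}))"

text \<open>A block: maximal connected subgraph without cut vertex (given by its vertex set;
  maximal such subgraphs are induced).\<close>

definition is_block :: "'a set \<Rightarrow> ('a \<Rightarrow> 'a \<Rightarrow> bool) \<Rightarrow> 'a set \<Rightarrow> bool" where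
  "is_block V E S \<longleftrightarrow> S \<subseteq> V \<and> connected_on E S \<and> no_cut_vertex E S \<and>
     (\<forall>T. S \<subset> T \<and> T \<subseteq> V \<longrightarrow> \<not> (connected_on E T \<and> no_cut_vertex E T))"

definition blocks :: "'a set \<Rightarrow> ('a \<Rightarrow> 'a \<Rightarrow> bool) \<Rightarrow> 'a set set" where
  "blocks V E = {S. is_block V E S}"

definition clique_tree :: "'a set \<Rightarrow> ('a \<Rightarrow> 'a \<Rightarrow> bool) \<Rightarrow> bool" where
  "clique_tree V E \<longleftrightarrow> graph V E \<and> connected_on E V \<and>
     (\<forall>S\<in>blocks V E. \<forall>x\<in>S. \<forall>y\<in>S. x \<noteq> y \<longrightarrow> E x y)"

text \<open>Zero forcing: from blue set C, a blue vertex u with exactly one white neighbour w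
  forces w. forces_to V E B C: C is reachable from B by a sequence of single forces.\<close>

inductive forces_to :: "'a set \<Rightarrow> ('a \<Rightarrow> 'a \<Rightarrow> bool) \<Rightarrow> 'a set \<Rightarrow> 'a set \<Rightarrow> bool"
  for V E B where
  init: "forces_to V E B B"
| step: "forces_to V E B C \<Longrightarrow> u \<in> C \<Longrightarrow> {x \<in> V. E u x \<and> x \<notin> C} = {w}
           \<Longrightarrow> forces_to V E B (insert w C)"

definition zero_forcing_set :: "'a set \<Rightarrow> ('a \<Rightarrow> 'a \<Rightarrow> bool) \<Rightarrow> 'a set \<Rightarrow> bool" where
  "zero_forcing_set V E B \<longleftrightarrow> B \<subseteq> V \<and> forces_to V E B V"

definition zero_forcing_number :: "'a set \<Rightarrow> ('a \<Rightarrow> 'a \<Rightarrow> bool) \<Rightarrow> nat" where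
  "zero_forcing_number V E = (LEAST k. \<exists>B. zero_forcing_set V E B \<and> card B = k)"

end

theory Submission
  imports Defs
begin

text \<open>When u forces w, every other vertex of the block containing the edge uw is a neighbour of u
  and hence already blue, so each force completes a new block; therefore every zero forcing set B
  satisfies n \<le> card B + b. Conversely, a clique tree has a pendant block L, attached to the rest
  at a single vertex c (take a block minimising the part of the graph lying beyond it). Deleting
  L - {c} leaves a clique tree with one block fewer, and a zero forcing set of it together with
  all of L except c and one further vertex a is a zero forcing set of the whole graph: a is forced
  from inside L as soon as c turns blue. Induction yields a zero forcing set of size n - b, and
  n \<ge> 2b + 1 because each block contributes at least two new vertices.\<close>

abbreviation induced :: "('a \<Rightarrow> 'a \<Rightarrow> bool) \<Rightarrow> 'a set \<Rightarrow> 'a \<Rightarrow> 'a \<Rightarrow> bool" where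
  "induced E S \<equiv> \<lambda>u v. E u v \<and> u \<in> S \<and> v \<in> S"

lemma graph_symp: "graph V E \<Longrightarrow> symp E"
  by (simp add: graph_def symp_def)

lemma graph_edge_in_V: "graph V E \<Longrightarrow> E x y \<Longrightarrow> x \<in> V \<and> y \<in> V"
  by (simp add: graph_def)

lemma graph_edge_neq: "graph V E \<Longrightarrow> E x y \<Longrightarrow> x \<noteq> y"
  by (auto simp add: graph_def)

lemma induced_rtranclp_mono: "(induced E S)\<^sup>*\<^sup>* x y \<Longrightarrow> S \<subseteq> T \<Longrightarrow> (induced E T)\<^sup>*\<^sup>* x y"
  by (erule rtranclp_mono[THEN predicate2D, rotated]) auto

lemma induced_rtranclp_sym:
  assumes "symp E" "(induced E S)\<^sup>*\<^sup>* x y"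
  shows "(induced E S)\<^sup>*\<^sup>* y x"
proof -
  have "symp (induced E S)" using assms(1) by (auto simp: symp_def)
  then show ?thesis using sympD[OF symp_rtranclp assms(2)] by blast
qed

lemma connected_on_induced: "S \<subseteq> U \<Longrightarrow> connected_on (induced E U) S = connected_on E S"
proof -
  assume "S \<subseteq> U"
  then have "(\<lambda>u v. (E u v \<and> u \<in> U \<and> v \<in> U) \<and> u \<in> S \<and> v \<in> S) = induced E S"
    by (auto simp: fun_eq_iff)
  then show ?thesis unfolding connected_on_def by simp
qed

lemma no_cut_vertex_induced: "S \<subseteq> U \<Longrightarrow> no_cut_vertex (induced E U) S = no_cut_vertex E S"
  using connected_on_induced[of "S - {v}" U E for v] by (auto simp: no_cut_vertex_def)

lemma connected_onI_root:
  assumes "symp E" "a \<in> S" "\<And>x. x \<in> S \<Longrightarrow> (induced E S)\<^sup>*\<^sup>* a x"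
  shows "connected_on E S"
  unfolding connected_on_def
proof (intro conjI ballI)
  show "S \<noteq> {}" using assms(2) by blast
  fix x y assume "x \<in> S" "y \<in> S"
  then show "(induced E S)\<^sup>*\<^sup>* x y"
    using assms(3) induced_rtranclp_sym[OF assms(1)] by (blast intro: rtranclp_trans)
qed

lemma connected_on_Un:
  assumes "connected_on E S" "connected_on E T" "m \<in> S" "m \<in> T"
  shows "connected_on E (S \<union> T)"
proof -
  have to_m: "(induced E (S \<union> T))\<^sup>*\<^sup>* x m \<and> (induced E (S \<union> T))\<^sup>*\<^sup>* m x"
    if "x \<in> S \<union> T" for x
  proof (cases "x \<in> S")
    case True
    then show ?thesis using assms(1,3) induced_rtranclp_mono[of E S _ _ "S \<union> T"]
      unfolding connected_on_def by blast
  next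
    case False
    then show ?thesis using that assms(2,4) induced_rtranclp_mono[of E T _ _ "S \<union> T"]
      unfolding connected_on_def by blast
  qed
  show ?thesis
    unfolding connected_on_def
  proof (intro conjI ballI)
    show "S \<union> T \<noteq> {}" using assms(3) by blast
  qed (use to_m in \<open>blast intro: rtranclp_trans\<close>)
qed

lemma connected_on_neighbour:
  assumes "connected_on E S" "y \<in> S" "s \<in> S" "y \<noteq> s"
  obtains y' where "E y y'" "y' \<in> S"
proof -
  have "(induced E S)\<^sup>*\<^sup>* y s" using assms unfolding connected_on_def by blast
  then show ?thesis using assms(4) that by (cases rule: converse_rtranclpE) auto
qed

lemma walk_connected_on:
  assumes "symp E" "successively E xs" "xs \<noteq> []"
  shows "connected_on E (set xs)"
proof -
  have "\<forall>x\<in>set xs. (induced E (set xs))\<^sup>*\<^sup>* (hd xs) x"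
    using assms(2,3)
  proof (induction xs rule: induct_list012)
    case (3 a b zs)
    have "successively E (b # zs)" using "3.prems"(1) by simp
    then have from_b: "\<forall>x\<in>set (b # zs). (induced E (set (b # zs)))\<^sup>*\<^sup>* b x"
      using "3.IH"(2) by fastforce
    have "(induced E (set (a # b # zs)))\<^sup>*\<^sup>* b x" if "x \<in> set (b # zs)" for x
      using induced_rtranclp_mono[OF bspec[OF from_b that] set_subset_Cons] .
    moreover have "induced E (set (a # b # zs)) a b" using "3.prems" by simp
    ultimately show ?case by (auto intro: converse_rtranclp_into_rtranclp)
  qed simp_all
  then show ?thesis using connected_onI_root[OF assms(1) hd_in_set[OF assms(3)]] by blast
qed

definition nonseparable :: "('a \<Rightarrow> 'a \<Rightarrow> bool) \<Rightarrow> 'a set \<Rightarrow> bool" where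
  "nonseparable E S \<longleftrightarrow> connected_on E S \<and> no_cut_vertex E S"

lemma nonseparable_induced: "S \<subseteq> U \<Longrightarrow> nonseparable (induced E U) S = nonseparable E S"
  by (simp add: nonseparable_def connected_on_induced no_cut_vertex_induced)

lemma nonseparable_singleton: "nonseparable E {v}"
  by (auto simp: nonseparable_def connected_on_def no_cut_vertex_def)

lemma nonseparable_Diff_connected:
  assumes "nonseparable E S" "x \<in> S" "x \<noteq> v"
  shows "connected_on E (S - {v})"
proof (cases "v \<in> S")
  case True
  moreover have "S - {v} \<noteq> {}" using assms(2,3) by blast
  ultimately show ?thesis using assms(1) unfolding nonseparable_def no_cut_vertex_def by simp
next
  case False
  then show ?thesis using assms(1) unfolding nonseparable_def by simp
qed

lemma nonseparable_Un:
  assumes "nonseparable E S" "nonseparable E T" "x \<noteq> y" "x \<in> S" "y \<in> S" "x \<in> T" "y \<in> T"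
  shows "nonseparable E (S \<union> T)"
  unfolding nonseparable_def
proof
  show "connected_on E (S \<union> T)"
    using assms(1,2) connected_on_Un[OF _ _ assms(4,6)] unfolding nonseparable_def by blast
  show "no_cut_vertex E (S \<union> T)" unfolding no_cut_vertex_def
  proof (intro ballI impI)
    fix v
    obtain m where m: "m \<in> S" "m \<in> T" "m \<noteq> v" using assms(3-7) by blast
    have "connected_on E ((S - {v}) \<union> (T - {v}))"
      using nonseparable_Diff_connected[OF assms(1) m(1,3)] nonseparable_Diff_connected[OF assms(2) m(2,3)]
      by (rule connected_on_Un) (use m in auto)
    then show "connected_on E (S \<union> T - {v})" by (simp add: Un_Diff)
  qed
qed

lemma nonseparable_cycle:
  assumes "symp E" "distinct cs" "successively E cs" "cs \<noteq> []" "E (last cs) (hd cs)"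
  shows "nonseparable E (set cs)"
  unfolding nonseparable_def
proof
  show "connected_on E (set cs)" using walk_connected_on assms by blast
  show "no_cut_vertex E (set cs)" unfolding no_cut_vertex_def
  proof (intro ballI impI)
    fix v assume v: "v \<in> set cs" "set cs - {v} \<noteq> {}"
    then obtain xs ys where split: "cs = xs @ v # ys" by (meson split_list)
    \<comment> \<open>removing v from the cycle leaves the path ys followed by xs\<close>
    have "ys = [] \<or> xs = [] \<or> E (last ys) (hd xs)"
      using assms(5) split by (cases "ys = [] \<or> xs = []") auto
    moreover have "successively E xs" "successively E ys"
      using assms(3) unfolding split by (auto simp: successively_append_iff successively_Cons)
    ultimately have "successively E (ys @ xs)" by (auto simp: successively_append_iff)
    moreover have "set (ys @ xs) = set cs - {v}" using assms(2) split by auto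
    ultimately show "connected_on E (set cs - {v})" using walk_connected_on[OF assms(1)] v(2) by force
  qed
qed

lemma nonseparable_edge: "symp E \<Longrightarrow> E x y \<Longrightarrow> x \<noteq> y \<Longrightarrow> nonseparable E {x, y}"
  using nonseparable_cycle[of E "[x, y]"] sympD[of E x y] by simp

lemma is_block_iff:
  "is_block V E S \<longleftrightarrow> S \<subseteq> V \<and> nonseparable E S \<and> (\<forall>T. S \<subset> T \<and> T \<subseteq> V \<longrightarrow> \<not> nonseparable E T)"
  by (simp add: is_block_def nonseparable_def)

lemma blocks_subset: "K \<in> blocks V E \<Longrightarrow> K \<subseteq> V"
  by (simp add: blocks_def is_block_def)

lemma finite_blocks: "finite V \<Longrightarrow> finite (blocks V E)"
  by (rule finite_subset[of _ "Pow V"]) (auto dest: blocks_subset)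

lemma nonseparable_subset_block:
  assumes "finite V" "S \<subseteq> V" "nonseparable E S"
  obtains K where "K \<in> blocks V E" "S \<subseteq> K"
proof -
  let ?P = "\<lambda>T. S \<subseteq> T \<and> T \<subseteq> V \<and> nonseparable E T"
  obtain K where K: "?P K" "\<And>T. ?P T \<Longrightarrow> card V - card K \<le> card V - card T"
    using ex_has_least_nat[of ?P S "\<lambda>T. card V - card T"] assms(2,3) by auto
  have "is_block V E K" unfolding is_block_iff
  proof (intro conjI allI impI notI)
    fix T assume T: "K \<subset> T \<and> T \<subseteq> V" "nonseparable E T"
    have "finite T" using T(1) assms(1) by (meson finite_subset)
    then have "card K < card T" "card T \<le> card V"
      using T(1) psubset_card_mono[of T K] card_mono[OF assms(1), of T] by auto
    moreover have "card V - card K \<le> card V - card T" using K(1) K(2)[of T] T by blast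
    ultimately show False by linarith
  qed (use K(1) in auto)
  then show ?thesis using that K(1) by (simp add: blocks_def)
qed

lemma block_contains_nonseparable:
  assumes "is_block V E K" "T \<subseteq> V" "nonseparable E T"
    "x \<noteq> y" "x \<in> K" "y \<in> K" "x \<in> T" "y \<in> T"
  shows "T \<subseteq> K"
proof (rule ccontr)
  assume "\<not> T \<subseteq> K"
  then have "K \<subset> K \<union> T" "K \<union> T \<subseteq> V" using assms(1,2) by (auto simp: is_block_def)
  moreover have "nonseparable E (K \<union> T)"
    using nonseparable_Un[of E K T x y] assms by (simp add: is_block_iff)
  ultimately show False using assms(1) by (simp add: is_block_iff)
qed

lemma blocks_eq:
  assumes "K \<in> blocks V E" "K' \<in> blocks V E" "x \<noteq> y" "x \<in> K" "y \<in> K" "x \<in> K'" "y \<in> K'"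
  shows "K = K'"
  using block_contains_nonseparable[of V E K K' x y] block_contains_nonseparable[of V E K' K x y] assms
  by (auto simp: blocks_def is_block_iff)

lemma edge_in_block:
  assumes "graph V E" "E x y"
  obtains K where "K \<in> blocks V E" "x \<in> K" "y \<in> K"
proof -
  have "finite V" "{x, y} \<subseteq> V" using assms by (auto simp: graph_def)
  moreover have "nonseparable E {x, y}"
    using nonseparable_edge[OF graph_symp[OF assms(1)] assms(2) graph_edge_neq[OF assms]] .
  ultimately obtain K where "K \<in> blocks V E" "{x, y} \<subseteq> K" by (rule nonseparable_subset_block)
  then show ?thesis using that by simp
qed

lemma vertex_in_block:
  assumes "graph V E" "v \<in> V"
  obtains K where "K \<in> blocks V E" "v \<in> K"
proof -
  have "finite V" "{v} \<subseteq> V" using assms by (auto simp: graph_def)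
  then obtain K where "K \<in> blocks V E" "{v} \<subseteq> K"
    using nonseparable_subset_block nonseparable_singleton by metis
  then show ?thesis using that by simp
qed

lemma clique_tree_graph: "clique_tree V E \<Longrightarrow> graph V E"
  by (simp add: clique_tree_def)

lemma clique_tree_adjacent:
  "clique_tree V E \<Longrightarrow> K \<in> blocks V E \<Longrightarrow> x \<in> K \<Longrightarrow> y \<in> K \<Longrightarrow> x \<noteq> y \<Longrightarrow> E x y"
  by (simp add: clique_tree_def)

lemma forces_to_subset: "forces_to V E B C \<Longrightarrow> C \<subseteq> B \<union> V"
  by (induction rule: forces_to.induct) auto

lemma forces_to_card_le:
  assumes ct: "clique_tree V E" and "forces_to V E B C" "finite B"
  shows "card C \<le> card B + card {S \<in> blocks V E. S \<subseteq> C}"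
  using assms(2)
proof (induction rule: forces_to.induct)
  case (step C u w)
  have g: "graph V E" using clique_tree_graph[OF ct] .
  have fin: "finite V" using g by (simp add: graph_def)
  have "finite C" using forces_to_subset[OF step.hyps(1)] assms(3) fin by (meson finite_UnI finite_subset)
  have w: "w \<in> V" "E u w" "w \<notin> C" using step.hyps(3) by auto
  have only_w: "z = w" if "z \<in> V" "E u z" "z \<notin> C" for z
    using step.hyps(3) that by (simp add: set_eq_iff) blast
  obtain K where K: "K \<in> blocks V E" "u \<in> K" "w \<in> K" using edge_in_block[OF g w(2)] .
  \<comment> \<open>every other vertex of K is a neighbour of u, hence was already blue\<close>
  have "K \<subseteq> insert w C"
  proof
    fix z assume "z \<in> K"
    then have "z = u \<or> z = w \<or> (z \<in> V \<and> E u z)"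
      using clique_tree_adjacent[OF ct K(1,2)] blocks_subset[OF K(1)] by blast
    then show "z \<in> insert w C" using step.hyps(2) only_w by blast
  qed
  let ?F = "{S \<in> blocks V E. S \<subseteq> C}" and ?F' = "{S \<in> blocks V E. S \<subseteq> insert w C}"
  have "finite ?F" "finite ?F'" using finite_blocks[OF fin] by simp_all
  have "K \<notin> ?F" using K(3) w(3) by blast
  then have "Suc (card ?F) = card (insert K ?F)" using \<open>finite ?F\<close> by simp
  also have "\<dots> \<le> card ?F'"
    using K(1) \<open>K \<subseteq> insert w C\<close> by (intro card_mono[OF \<open>finite ?F'\<close>]) blast
  finally have "Suc (card ?F) \<le> card ?F'" .
  then show ?case using step.IH \<open>finite C\<close> w(3) by simp
qed simp

lemma zero_forcing_set_card_ge:
  assumes "clique_tree V E" "zero_forcing_set V E B"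
  shows "card V \<le> card B + card (blocks V E)"
proof -
  have "finite V" using clique_tree_graph[OF assms(1)] by (simp add: graph_def)
  then have "finite B" using assms(2) finite_subset by (auto simp: zero_forcing_set_def)
  then have "card V \<le> card B + card {S \<in> blocks V E. S \<subseteq> V}"
    using forces_to_card_le[OF assms(1)] assms(2) by (simp add: zero_forcing_set_def)
  moreover have "{S \<in> blocks V E. S \<subseteq> V} = blocks V E" using blocks_subset by blast
  ultimately show ?thesis by simp
qed

lemma induced_rtranclp_closed: "(induced E S)\<^sup>*\<^sup>* u v \<Longrightarrow> u \<in> S \<Longrightarrow> v \<in> S"
  by (induction rule: rtranclp_induct) auto

lemma induced_rtranclp_restrict:
  assumes "(induced E S)\<^sup>*\<^sup>* u v" "\<And>w. (induced E S)\<^sup>*\<^sup>* u w \<Longrightarrow> w \<in> T"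
  shows "(induced E (S \<inter> T))\<^sup>*\<^sup>* u v"
  using assms
proof (induction rule: rtranclp_induct)
  case (step v w)
  have "v \<in> T" "w \<in> T" using step.prems step.hyps by (auto intro: rtranclp.rtrancl_into_rtrancl)
  then show ?case using step by (auto intro: rtranclp.rtrancl_into_rtrancl)
qed simp

lemma successively_induced_subset:
  "successively (induced E S) xs \<Longrightarrow> 2 \<le> length xs \<Longrightarrow> set xs \<subseteq> S"
proof (induction xs)
  case (Cons a ys)
  then obtain b zs where "ys = b # zs" by (cases ys) auto
  then show ?case using Cons by (cases zs) auto
qed simp

lemma rtranclp_first_entry:
  assumes "R\<^sup>*\<^sup>* a b" "b \<in> L" "a \<notin> L"
  obtains ps q where "ps \<noteq> []" "hd ps = a" "set ps \<inter> L = {}" "distinct ps" "q \<in> L"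
    "successively R (ps @ [q])"
  using assms
proof (induction arbitrary: thesis rule: converse_rtranclp_induct)
  case (step a a')
  show ?case
  proof (cases "a' \<in> L")
    case True
    then show ?thesis using step by (intro step.prems(1)[of "[a]" a']) auto
  next
    case False
    then obtain ps q where ps: "ps \<noteq> []" "hd ps = a'" "set ps \<inter> L = {}" "distinct ps" "q \<in> L"
      "successively R (ps @ [q])"
      using step.IH step.prems(2) by blast
    show ?thesis
    proof (cases "a \<in> set ps")
      case True
      \<comment> \<open>the walk returns to a: cut off the loop\<close>
      then obtain xs ys where ps_eq: "ps = xs @ a # ys" by (meson split_list)
      have "successively R ((a # ys) @ [q])"
        using ps(6) unfolding ps_eq by (simp add: successively_append_iff)
      then show ?thesis using ps ps_eq by (intro step.prems(1)[of "a # ys" q]) auto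
    next
      case False
      have "successively R ((a # ps) @ [q])"
        using ps(1,2,6) step.hyps(1) by (cases ps) auto
      then show ?thesis using ps False step.prems(3) by (intro step.prems(1)[of "a # ps" q]) auto
    qed
  qed
qed simp

lemma clique_tree_no_ear:
  assumes ct: "clique_tree V E" and K: "K \<in> blocks V E" "x \<in> K" "q \<in> K" "x \<noteq> q"
    and ps: "ps \<noteq> []" "set ps \<inter> K = {}" "distinct (x # ps @ [q])" "successively E (x # ps @ [q])"
  shows False
proof -
  have g: "graph V E" using clique_tree_graph[OF ct] .
  have "E q x" using clique_tree_adjacent[OF ct K(1,3,2)] K(4) by simp
  then have "nonseparable E (set (x # ps @ [q]))"
    using nonseparable_cycle[OF graph_symp[OF g] ps(3,4)] by simp
  moreover have "successively (induced E V) (x # ps @ [q])"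
    using ps(4) graph_edge_in_V[OF g] by (auto intro: successively_mono)
  then have "set (x # ps @ [q]) \<subseteq> V" by (rule successively_induced_subset) simp
  ultimately have "set (x # ps @ [q]) \<subseteq> K"
    using K by (intro block_contains_nonseparable[of V E K _ x q]) (auto simp: blocks_def)
  then show False using ps(1,2) by (cases ps) auto
qed

lemma avoiding_walk_misses_block:
  assumes ct: "clique_tree V E" and L: "L \<in> blocks V E" "L' \<in> blocks V E" "L \<noteq> L'" "y \<in> L" "y \<in> L'"
    and u: "u \<in> L'" "u \<noteq> y" and walk: "(induced E (- {y}))\<^sup>*\<^sup>* u v"
  shows "v \<notin> L"
proof
  assume "v \<in> L"
  have "u \<notin> L" using blocks_eq[OF L(1,2) u(2)[symmetric] L(4) _ L(5) u(1)] L(3) by blast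
  then obtain ps q where pq: "ps \<noteq> []" "hd ps = u" "set ps \<inter> L = {}" "distinct ps" "q \<in> L"
      "successively (induced E (- {y})) (ps @ [q])"
    using rtranclp_first_entry[OF walk \<open>v \<in> L\<close>] by blast
  have "set (ps @ [q]) \<subseteq> - {y}"
    using successively_induced_subset[OF pq(6)] pq(1) by (cases ps) auto
  moreover have "successively E (ps @ [q])" using pq(6) by (rule successively_mono) simp
  moreover have "E y u" using clique_tree_adjacent[OF ct L(2,5) u(1)] u(2) by simp
  ultimately have "distinct (y # ps @ [q])" "successively E (y # ps @ [q])"
    using pq by (auto simp: successively_Cons neq_Nil_conv)
  moreover have "y \<noteq> q" using \<open>set (ps @ [q]) \<subseteq> - {y}\<close> by auto
  ultimately show False using clique_tree_no_ear[OF ct L(1,4) pq(5) _ pq(1,3)] by blast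
qed

definition reach_avoiding :: "('a \<Rightarrow> 'a \<Rightarrow> bool) \<Rightarrow> 'a \<Rightarrow> 'a set \<Rightarrow> 'a set" where
  "reach_avoiding E c A = {v. \<exists>u\<in>A. (induced E (- {c}))\<^sup>*\<^sup>* u v}"

lemma reach_avoiding_subset:
  assumes "graph V E" "A \<subseteq> V"
  shows "reach_avoiding E c A \<subseteq> V"
proof
  fix v assume "v \<in> reach_avoiding E c A"
  then obtain u where "(induced E (- {c}))\<^sup>*\<^sup>* u v" "u \<in> A" by (auto simp: reach_avoiding_def)
  then show "v \<in> V"
    using assms by (induction rule: rtranclp_induct) (auto dest: graph_edge_in_V)
qed

text \<open>reach_avoiding E c (L - {c}) is the part of the graph beyond the block L at c. If it is
  minimal among all such pairs, no vertex of L other than c has a neighbour outside L.\<close>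

lemma reach_avoiding_psubset:
  assumes ct: "clique_tree V E" and L: "L \<in> blocks V E" "c \<in> L" "y \<in> L" "y \<noteq> c"
    and L': "L' \<in> blocks V E" "y \<in> L'" "z \<in> L'" "z \<notin> L"
  shows "reach_avoiding E y (L' - {y}) \<subset> reach_avoiding E c (L - {c})"
proof -
  let ?R' = "reach_avoiding E y (L' - {y})"
  have "L \<noteq> L'" using L'(3,4) by blast
  have c_notin: "c \<notin> ?R'"
  proof
    assume "c \<in> ?R'"
    then obtain u where "u \<in> L'" "u \<noteq> y" "(induced E (- {y}))\<^sup>*\<^sup>* u c"
      by (auto simp: reach_avoiding_def)
    then show False using avoiding_walk_misses_block[OF ct L(1) L'(1) \<open>L \<noteq> L'\<close> L(3) L'(2)] L(2) by blast
  qed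
  have "v \<in> reach_avoiding E c (L - {c})" if "v \<in> ?R'" for v
  proof -
    obtain u where u: "u \<in> L'" "u \<noteq> y" "(induced E (- {y}))\<^sup>*\<^sup>* u v"
      using \<open>v \<in> ?R'\<close> by (auto simp: reach_avoiding_def)
    \<comment> \<open>the walk from u stays inside the reach, which avoids c\<close>
    have "(induced E (- {y} \<inter> - {c}))\<^sup>*\<^sup>* u v"
      using u c_notin by (intro induced_rtranclp_restrict) (auto simp: reach_avoiding_def)
    then have "(induced E (- {c}))\<^sup>*\<^sup>* u v" by (rule induced_rtranclp_mono) blast
    moreover have "u \<noteq> c" using u c_notin by (auto simp: reach_avoiding_def)
    then have "induced E (- {c}) y u" using clique_tree_adjacent[OF ct L'(1,2) u(1)] u(2) L(4) by simp
    ultimately have "(induced E (- {c}))\<^sup>*\<^sup>* y v" by (rule converse_rtranclp_into_rtranclp[rotated])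
    then show ?thesis using L(3,4) by (auto simp: reach_avoiding_def)
  qed
  moreover have "y \<in> reach_avoiding E c (L - {c})"
    unfolding reach_avoiding_def using L(3,4) by blast
  moreover have "y \<notin> ?R'"
  proof
    assume "y \<in> ?R'"
    then obtain u where "u \<noteq> y" "(induced E (- {y}))\<^sup>*\<^sup>* u y" by (auto simp: reach_avoiding_def)
    then show False using induced_rtranclp_closed[of E "- {y}" u y] by blast
  qed
  ultimately show ?thesis by blast
qed

definition pendant_block :: "'a set \<Rightarrow> ('a \<Rightarrow> 'a \<Rightarrow> bool) \<Rightarrow> 'a set \<Rightarrow> 'a \<Rightarrow> bool" where
  "pendant_block V E L c \<longleftrightarrow> L \<in> blocks V E \<and> c \<in> L \<and> (\<forall>y\<in>L - {c}. \<forall>z. E y z \<longrightarrow> z \<in> L)"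

lemma clique_tree_pendant_block:
  assumes ct: "clique_tree V E"
  obtains L c where "pendant_block V E L c"
proof -
  have g: "graph V E" using clique_tree_graph[OF ct] .
  let ?P = "\<lambda>(L, c). L \<in> blocks V E \<and> c \<in> L"
  let ?size = "\<lambda>(L, c). card (reach_avoiding E c (L - {c}))"
  obtain v where "v \<in> V" using ct by (auto simp: clique_tree_def connected_on_def)
  then obtain K where "K \<in> blocks V E" "v \<in> K" using vertex_in_block[OF g] by blast
  then obtain L c where Lc: "L \<in> blocks V E" "c \<in> L"
    and min: "\<And>L' y. L' \<in> blocks V E \<Longrightarrow> y \<in> L' \<Longrightarrow>
      card (reach_avoiding E c (L - {c})) \<le> card (reach_avoiding E y (L' - {y}))"
    using ex_has_least_nat[of ?P "(K, v)" ?size] by auto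
  have "pendant_block V E L c"
    unfolding pendant_block_def
  proof (intro conjI Lc ballI allI impI, rule ccontr)
    fix y z assume y: "y \<in> L - {c}" and "E y z" "z \<notin> L"
    then obtain L' where L': "L' \<in> blocks V E" "y \<in> L'" "z \<in> L'" using edge_in_block[OF g] by blast
    have "finite (reach_avoiding E c (L - {c}))"
      using reach_avoiding_subset[OF g] blocks_subset[OF Lc(1)] g finite_subset
      by (metis Diff_subset graph_def subset_trans)
    then have "card (reach_avoiding E y (L' - {y})) < card (reach_avoiding E c (L - {c}))"
      using reach_avoiding_psubset[OF ct Lc _ _ L' \<open>z \<notin> L\<close>] y by (simp add: psubset_card_mono)
    then show False using min[OF L'(1,2)] by simp
  qed
  then show ?thesis by (rule that)
qed

lemma card_ge_3_obtain_third:
  assumes "3 \<le> card S"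
  obtains s where "s \<in> S" "s \<noteq> x" "s \<noteq> y"
proof -
  have "card {x, y} \<le> 2" by (simp add: card_insert_le_m1)
  then have "\<not> S \<subseteq> {x, y}" using assms card_mono[of "{x, y}" S] by auto
  then show ?thesis using that by blast
qed

lemma forces_to_insert:
  assumes "forces_to V E B C" "u \<in> C" "E u w" "w \<in> V" "{x \<in> V. E u x \<and> x \<notin> C} \<subseteq> {w}"
  shows "forces_to V E B (insert w C)"
proof (cases "w \<in> C")
  case False
  then have "{x \<in> V. E u x \<and> x \<notin> C} = {w}" using assms(3-5) by blast
  then show ?thesis using forces_to.step[OF assms(1,2)] by simp
qed (use assms(1) in \<open>simp add: insert_absorb\<close>)

locale pendant_block_removal =
  fixes V :: "'a set" and E :: "'a \<Rightarrow> 'a \<Rightarrow> bool" and L :: "'a set" and c :: 'a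
  assumes clique_tree: "clique_tree V E"
    and big_blocks: "\<forall>S\<in>blocks V E. 3 \<le> card S"
    and pendant: "pendant_block V E L c"
    and proper: "L \<noteq> V"
begin

definition rest :: "'a set" where
  "rest = V - (L - {c})"

abbreviation rest_edge :: "'a \<Rightarrow> 'a \<Rightarrow> bool" where
  "rest_edge \<equiv> induced E rest"

lemma graph_VE: "graph V E"
  using clique_tree by (rule clique_tree_graph)

lemma L_block: "L \<in> blocks V E" and c_in_L: "c \<in> L"
  using pendant by (simp_all add: pendant_block_def)

lemma L_subset: "L \<subseteq> V"
  using blocks_subset[OF L_block] .

lemma rest_subset: "rest \<subseteq> V"
  by (auto simp: rest_def)

lemma c_in_rest: "c \<in> rest"
  using c_in_L L_subset by (auto simp: rest_def)

lemma neighbour_in_L: "y \<in> L \<Longrightarrow> y \<noteq> c \<Longrightarrow> E y z \<Longrightarrow> z \<in> L"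
  using pendant by (auto simp: pendant_block_def)

lemma neighbour_in_rest: "u \<in> rest \<Longrightarrow> u \<noteq> c \<Longrightarrow> E u z \<Longrightarrow> z \<in> rest"
  using neighbour_in_L graph_symp[OF graph_VE] graph_edge_in_V[OF graph_VE]
  by (auto simp: rest_def dest: sympD)

lemma graph_rest: "graph rest rest_edge"
  using graph_VE finite_subset[OF rest_subset] by (auto simp: graph_def)

text \<open>A walk of the whole graph starting in the rest can leave it only from c, into L - {c},
  and then stays in L until it comes back to c.\<close>

lemma connected_rest: "connected_on rest_edge rest"
proof -
  let ?R = "induced rest_edge rest"
  have walk: "(b \<in> rest \<longrightarrow> ?R\<^sup>*\<^sup>* a b) \<and> (b \<notin> rest \<longrightarrow> ?R\<^sup>*\<^sup>* a c)"
    if "(induced E V)\<^sup>*\<^sup>* a b" "a \<in> rest" for a b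
    using that
  proof (induction rule: rtranclp_induct)
    case (step b b')
    then have e: "E b b'" by simp
    show ?case
    proof (cases "b \<in> rest")
      case True
      show ?thesis
      proof (cases "b' \<in> rest")
        case True
        then show ?thesis using step \<open>b \<in> rest\<close> e by (auto intro: rtranclp.rtrancl_into_rtrancl)
      next
        case False
        then have "b = c" using neighbour_in_rest[OF \<open>b \<in> rest\<close> _ e] by blast
        then show ?thesis using step \<open>b \<in> rest\<close> False by auto
      qed
    next
      case False
      then have "b \<in> L" "b \<noteq> c" using step.hyps(2) by (auto simp: rest_def)
      then have "b' \<in> L" using neighbour_in_L e by blast
      then show ?thesis using step False by (auto simp: rest_def)
    qed
  qed simp
  have "connected_on E V" using clique_tree by (simp add: clique_tree_def)
  then show ?thesis
    unfolding connected_on_def using walk c_in_rest rest_subset by blast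
qed

lemma nonseparable_subset_L:
  assumes "nonseparable E T" "T \<subseteq> V" "y \<in> T" "y \<in> L" "y \<noteq> c" "s \<in> T" "s \<noteq> y"
  shows "T \<subseteq> L"
proof -
  obtain y' where "E y y'" "y' \<in> T"
    using connected_on_neighbour assms(1,3,6,7) unfolding nonseparable_def by metis
  then have "y' \<in> L" "y' \<noteq> y" using neighbour_in_L[OF assms(4,5)] graph_edge_neq[OF graph_VE] by auto
  then show ?thesis
    using block_contains_nonseparable[of V E L T y y'] L_block assms(1-4) \<open>y' \<in> T\<close>
    by (auto simp: blocks_def)
qed

lemma block_subset_rest:
  assumes S: "S \<in> blocks V E" "S \<noteq> L"
  shows "S \<subseteq> rest"
proof
  fix y assume "y \<in> S"
  show "y \<in> rest"
  proof (rule ccontr)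
    assume "y \<notin> rest"
    then have y: "y \<in> L" "y \<noteq> c" using \<open>y \<in> S\<close> blocks_subset[OF S(1)] by (auto simp: rest_def)
    obtain s where "s \<in> S" "s \<noteq> y" using big_blocks S(1) card_ge_3_obtain_third by metis
    moreover have "nonseparable E S" using S(1) by (simp add: blocks_def is_block_iff)
    ultimately have "S \<subseteq> L" using nonseparable_subset_L blocks_subset[OF S(1)] \<open>y \<in> S\<close> y by blast
    then have "S = L" using blocks_eq[OF S(1) L_block] \<open>y \<in> S\<close> \<open>s \<in> S\<close> \<open>s \<noteq> y\<close> by blast
    then show False using S(2) by contradiction
  qed
qed

lemma blocks_rest_supset: "blocks V E - {L} \<subseteq> blocks rest rest_edge"
proof
  fix S assume S: "S \<in> blocks V E - {L}"
  then have sub: "S \<subseteq> rest" using block_subset_rest by blast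
  have "\<not> nonseparable rest_edge T" if "S \<subset> T" "T \<subseteq> rest" for T
    using S that rest_subset nonseparable_induced[OF that(2)] by (auto simp: blocks_def is_block_iff)
  then show "S \<in> blocks rest rest_edge"
    using S sub nonseparable_induced[OF sub] by (auto simp: blocks_def is_block_iff)
qed

lemma singleton_c_not_block: "{c} \<notin> blocks rest rest_edge"
proof
  assume c_block: "{c} \<in> blocks rest rest_edge"
  obtain x where "x \<in> V" "x \<notin> L" using proper L_subset by blast
  then have "x \<in> rest" "x \<noteq> c" using c_in_L by (auto simp: rest_def)
  then obtain u where u: "rest_edge c u" "u \<in> rest"
    using connected_on_neighbour[OF connected_rest c_in_rest] by metis
  then have "nonseparable rest_edge {c, u}" "{c} \<subset> {c, u}" "{c, u} \<subseteq> rest"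
    using nonseparable_edge[OF graph_symp[OF graph_rest] u(1) graph_edge_neq[OF graph_rest u(1)]]
      graph_edge_neq[OF graph_rest u(1)] c_in_rest by auto
  then show False using c_block by (auto simp: blocks_def is_block_iff)
qed

lemma blocks_rest_subset: "blocks rest rest_edge \<subseteq> blocks V E - {L}"
proof
  fix S assume S: "S \<in> blocks rest rest_edge"
  then have sub: "S \<subseteq> rest" and ns: "nonseparable E S"
    using nonseparable_induced[of S rest E] by (auto simp: blocks_def is_block_iff)
  have max: "\<not> nonseparable E T" if T: "S \<subset> T" "T \<subseteq> V" for T
  proof
    assume ns_T: "nonseparable E T"
    show False
    proof (cases "T \<subseteq> rest")
      case True
      then have "nonseparable rest_edge T" using ns_T nonseparable_induced by blast
      then show False using S T(1) True unfolding blocks_def is_block_iff by blast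
    next
      case False
      then obtain y where y: "y \<in> T" "y \<in> L" "y \<noteq> c" using T(2) by (auto simp: rest_def)
      obtain s where "s \<in> S" using S by (auto simp: blocks_def is_block_def connected_on_def)
      then have "s \<in> T" "s \<noteq> y" using T(1) sub y(2,3) by (auto simp: rest_def)
      then have "T \<subseteq> L" using nonseparable_subset_L[OF ns_T T(2) y] by blast
      then have "S = {c}" using T(1) sub \<open>s \<in> S\<close> by (auto simp: rest_def)
      then show False using S singleton_c_not_block by simp
    qed
  qed
  have "S \<noteq> L"
  proof
    assume "S = L"
    obtain y where "y \<in> L" "y \<noteq> c" using big_blocks L_block card_ge_3_obtain_third by metis
    then show False using \<open>S = L\<close> sub by (auto simp: rest_def)
  qed
  then show "S \<in> blocks V E - {L}"
    using sub rest_subset ns max by (auto simp: blocks_def is_block_iff)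
qed

lemma blocks_rest: "blocks rest rest_edge = blocks V E - {L}"
  using blocks_rest_subset blocks_rest_supset by blast

lemma clique_tree_rest: "clique_tree rest rest_edge"
proof -
  have "E x y" if "S \<in> blocks V E" "x \<in> S" "y \<in> S" "x \<noteq> y" for S x y
    using clique_tree that by (simp add: clique_tree_def)
  moreover have "S \<subseteq> rest" if "S \<in> blocks rest rest_edge" for S
    using that blocks_subset by blast
  ultimately show ?thesis
    unfolding clique_tree_def using graph_rest connected_rest blocks_rest by blast
qed

lemma card_V: "card V = card rest + (card L - 1)"
proof -
  have "finite V" using graph_VE by (simp add: graph_def)
  moreover have "V = rest \<union> (L - {c})" "rest \<inter> (L - {c}) = {}" using L_subset by (auto simp: rest_def)
  ultimately have "card V = card rest + card (L - {c})"
    using card_Un_disjoint[of rest "L - {c}"] finite_subset[OF rest_subset] finite_subset[OF L_subset]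
    by simp
  then show ?thesis using c_in_L by simp
qed

lemma card_blocks: "card (blocks V E) = card (blocks rest rest_edge) + 1"
proof -
  have "finite (blocks V E)" using graph_VE by (simp add: graph_def finite_blocks)
  then show ?thesis using blocks_rest card_Suc_Diff1[OF _ L_block] by simp
qed

context
  fixes a :: 'a
  assumes a: "a \<in> L" "a \<noteq> c"
begin

lemma forces_to_complete_L:
  assumes "forces_to V E B D" "L - {a} \<subseteq> D"
  shows "forces_to V E B (insert a D)"
proof -
  obtain x where x: "x \<in> L" "x \<noteq> c" "x \<noteq> a"
    using big_blocks L_block card_ge_3_obtain_third by metis
  have "E x a" using clique_tree_adjacent[OF clique_tree L_block x(1) a(1) x(3)] .
  moreover have "{z \<in> V. E x z \<and> z \<notin> D} \<subseteq> {a}" using neighbour_in_L[OF x(1,2)] assms(2) by blast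
  ultimately show ?thesis using forces_to_insert[OF assms(1)] x assms(2) a(1) L_subset by blast
qed

lemma white_neighbours_lift:
  assumes "u \<in> C" "{x \<in> rest. rest_edge u x \<and> x \<notin> C} = {w}"
  shows "{z \<in> V. E u z \<and> z \<notin> C \<union> (L - {c, a}) \<union> (if c \<in> C then {a} else {})} \<subseteq> {w}"
proof
  fix z assume "z \<in> {z \<in> V. E u z \<and> z \<notin> C \<union> (L - {c, a}) \<union> (if c \<in> C then {a} else {})}"
  then have z: "z \<in> V" "E u z" "z \<notin> C" "z \<notin> L - {c, a}" "c \<in> C \<Longrightarrow> z \<noteq> a" by auto
  have "u \<in> rest" using assms(2) by blast
  \<comment> \<open>a white neighbour outside the rest would lie in L, so u = c, but then all of L - {c} is blue\<close>
  have "z \<in> rest"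
  proof (rule ccontr)
    assume "z \<notin> rest"
    then have "z \<in> L" "z \<noteq> c" using z(1) by (auto simp: rest_def)
    then have "u = c"
      using neighbour_in_L sympD[OF graph_symp[OF graph_VE] z(2)] \<open>u \<in> rest\<close> by (auto simp: rest_def)
    then show False using z(4,5) \<open>z \<in> L\<close> \<open>z \<noteq> c\<close> assms(1) by auto
  qed
  then show "z \<in> {w}" using assms(2) z(2,3) \<open>u \<in> rest\<close> by blast
qed

text \<open>Every force of the rest is also a force of the whole graph once L - {c, a} is blue; when c
  turns blue, the pendant block is completed by forcing a.\<close>

lemma forces_to_lift:
  assumes "forces_to rest rest_edge B' C"
  shows "forces_to V E (B' \<union> (L - {c, a})) (C \<union> (L - {c, a}) \<union> (if c \<in> C then {a} else {}))"
  using assms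
proof (induction rule: forces_to.induct)
  case init
  show ?case
  proof (cases "c \<in> B'")
    case True
    then have "forces_to V E (B' \<union> (L - {c, a})) (insert a (B' \<union> (L - {c, a})))"
      by (intro forces_to_complete_L forces_to.init) auto
    then show ?thesis using True by simp
  qed (simp add: forces_to.init)
next
  case (step C u w)
  let ?D = "C \<union> (L - {c, a}) \<union> (if c \<in> C then {a} else {})"
  have w: "E u w" "w \<in> rest" "w \<notin> C" using step.hyps(3) by auto
  have "forces_to V E (B' \<union> (L - {c, a})) (insert w ?D)"
    using forces_to_insert[OF step.IH _ w(1) _ white_neighbours_lift[OF step.hyps(2,3)]]
      step.hyps(2) w(2) rest_subset by blast
  moreover have "L - {a} \<subseteq> insert w ?D" if "w = c" using that by auto
  ultimately show ?case
    using forces_to_complete_L[of "B' \<union> (L - {c, a})" "insert w ?D"] w(3) by (cases "w = c") auto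
qed

lemma zero_forcing_set_lift:
  assumes "zero_forcing_set rest rest_edge B'"
  shows "zero_forcing_set V E (B' \<union> (L - {c, a}))"
    and "card (B' \<union> (L - {c, a})) = card B' + (card L - 2)"
proof -
  have B': "B' \<subseteq> rest" using assms by (simp add: zero_forcing_set_def)
  have "forces_to V E (B' \<union> (L - {c, a})) (rest \<union> (L - {c, a}) \<union> {a})"
    using forces_to_lift[of B' rest] assms c_in_rest by (simp add: zero_forcing_set_def)
  moreover have "rest \<union> (L - {c, a}) \<union> {a} = V" using c_in_rest a L_subset by (auto simp: rest_def)
  ultimately show "zero_forcing_set V E (B' \<union> (L - {c, a}))"
    using B' rest_subset L_subset by (auto simp: zero_forcing_set_def)
  have "finite L" using L_subset graph_VE finite_subset by (auto simp: graph_def)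
  moreover have "finite B'" using B' finite_subset graph_rest by (auto simp: graph_def)
  moreover have "B' \<inter> (L - {c, a}) = {}" using B' by (auto simp: rest_def)
  ultimately show "card (B' \<union> (L - {c, a})) = card B' + (card L - 2)"
    using a c_in_L by (simp add: card_Un_disjoint card_Diff_subset)
qed

end

end

lemma blocks_eq_singleton_if_block:
  assumes "is_block V E V"
  shows "blocks V E = {V}"
proof -
  have "S = V" if "is_block V E S" for S
    using that assms unfolding is_block_iff by blast
  then show ?thesis using assms by (auto simp: blocks_def)
qed

lemma zero_forcing_set_complete:
  assumes "\<forall>x\<in>V. \<forall>y\<in>V. x \<noteq> y \<longrightarrow> E x y" "a \<in> V" "x \<in> V" "x \<noteq> a"
  shows "zero_forcing_set V E (V - {a})"
proof -
  have "x \<in> V - {a}" using assms(3,4) by simp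
  moreover have "{z \<in> V. E x z \<and> z \<notin> V - {a}} = {a}" using assms by auto
  ultimately have "forces_to V E (V - {a}) (insert a (V - {a}))"
    by (rule forces_to.step[OF forces_to.init])
  then show ?thesis using assms(2) by (simp add: zero_forcing_set_def insert_absorb)
qed

lemma clique_tree_zero_forcing_set:
  assumes "clique_tree V E" "\<forall>S\<in>blocks V E. 3 \<le> card S"
  obtains B where "zero_forcing_set V E B" "card B + card (blocks V E) = card V"
    "2 * card (blocks V E) + 1 \<le> card V"
  using assms
proof (induction "card V" arbitrary: V E thesis rule: less_induct)
  case less
  have g: "graph V E" using clique_tree_graph[OF less.prems(2)] .
  obtain L c where pb: "pendant_block V E L c" using clique_tree_pendant_block[OF less.prems(2)] .
  then have L: "L \<in> blocks V E" "c \<in> L" by (simp_all add: pendant_block_def)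
  have "3 \<le> card L" using less.prems(3) L(1) by blast
  then obtain a where a: "a \<in> L" "a \<noteq> c" by (rule card_ge_3_obtain_third[where x = c and y = c])
  show ?case
  proof (cases "L = V")
    case True
    then have "blocks V E = {V}" using L(1) blocks_eq_singleton_if_block by (simp add: blocks_def)
    moreover have "zero_forcing_set V E (V - {a})"
      using zero_forcing_set_complete clique_tree_adjacent[OF less.prems(2) L(1)] L a True by metis
    moreover have "card (V - {a}) = card V - 1" using a True g by (simp add: graph_def)
    ultimately show ?thesis using less.prems(1) \<open>3 \<le> card L\<close> True by force
  next
    case False
    interpret pendant_block_removal V E L c using less.prems(2,3) pb False by unfold_locales
    have "card rest < card V" using card_V \<open>3 \<le> card L\<close> by simp
    moreover have "\<forall>S\<in>blocks rest rest_edge. 3 \<le> card S" using less.prems(3) blocks_rest by blast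
    ultimately obtain B' where B': "zero_forcing_set rest rest_edge B'"
      "card B' + card (blocks rest rest_edge) = card rest" "2 * card (blocks rest rest_edge) + 1 \<le> card rest"
      using less.hyps[OF _ _ clique_tree_rest] by blast
    show ?thesis
      using less.prems(1)[OF zero_forcing_set_lift(1)[OF a B'(1)]] zero_forcing_set_lift(2)[OF a B'(1)]
        B'(2,3) card_V card_blocks \<open>3 \<le> card L\<close> by simp
  qed
qed

lemma clique_tree_card_blocks_pos: "clique_tree V E \<Longrightarrow> 0 < card (blocks V E)"
proof -
  assume ct: "clique_tree V E"
  obtain L c where "pendant_block V E L c" using clique_tree_pendant_block[OF ct] .
  then have "blocks V E \<noteq> {}" by (auto simp: pendant_block_def)
  moreover have "finite (blocks V E)" using clique_tree_graph[OF ct] by (simp add: graph_def finite_blocks)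
  ultimately show ?thesis by (simp add: card_gt_0_iff)
qed

lemma zero_forcing_number_eqI:
  assumes "zero_forcing_set V E B" "\<And>B'. zero_forcing_set V E B' \<Longrightarrow> card B \<le> card B'"
  shows "zero_forcing_number V E = card B"
  unfolding zero_forcing_number_def using assms by (intro Least_equality) auto

theorem mainTheorem3:
  fixes V :: "'a set" and E :: "'a \<Rightarrow> 'a \<Rightarrow> bool" and n b k :: nat
  assumes "clique_tree V E"
    and "\<forall>S\<in>blocks V E. card S \<ge> 3"
    and "n = card V"
    and "b = card (blocks V E)"
    and "k = zero_forcing_number V E"
  shows "int k = int n - int b \<and> n div 2 + 1 \<le> k \<and> k \<le> n - 1"
proof -
  obtain B where B: "zero_forcing_set V E B" "card B + b = n" "2 * b + 1 \<le> n"
    using clique_tree_zero_forcing_set assms(1,2) unfolding assms(3,4) by blast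
  have "k = card B"
    using zero_forcing_number_eqI[OF B(1)] zero_forcing_set_card_ge[OF assms(1)] B(2)
    unfolding assms(3-5) by (metis add_le_cancel_right)
  moreover have "1 \<le> b" using clique_tree_card_blocks_pos[OF assms(1)] assms(4) by simp
  ultimately show ?thesis using B(2,3) by presburger
qed

end
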